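(* Let $\psi$ be a Dirichlet character modulo $q$. For any positive integer $n$ and $\Re(\xi) > 0$, we have \begin{equation*} \frac{\sigma_{\xi}(n, \psi)}{n^{\xi}} = \frac{L(1+\xi, \overline{\psi})}{\tau(\overline{\psi})} \sum_{\ell = 1}^{\infty} \frac{1}{\ell^{1+\xi}} \sum_{\substack{h \bmod{\ell q} \\ (h, \ell q) = 1}} \overline{\psi}(h) e_{\ell q}(hn). \end{equation*}
   Context: Here $\sigma_{\xi}(n, \psi) = \sum_{d \mid n} \psi(d) d^{\xi}$ is the twisted divisor function, $\tau(\overline{\psi}) = \sum_{a \bmod q} \overline{\psi}(a) e_{q}(a)$ is the Gauss sum, $e_{p}(z) = \exp(2\pi i z/p)$, $L(s,\overline{\psi})$ is the Dirichlet $L$-function of $\overline{\psi}$, and the inner sum runs over reduced residues $h$ modulo $\ell q$. *)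

theory Defs
  imports "HOL-Analysis.Analysis"
begin

definition dirichlet_char :: "nat \<Rightarrow> (nat \<Rightarrow> complex) \<Rightarrow> bool" where
  "dirichlet_char q \<phi> \<longleftrightarrow> q > 0 \<and>
     (\<forall>m n. \<phi> (m * n) = \<phi> m * \<phi> n) \<and>
     (\<forall>n. \<phi> (n + q) = \<phi> n) \<and>
     (\<forall>n. \<phi> n = 0 \<longleftrightarrow> \<not> coprime n q)"

text \<open>Primitive: not induced by a character of any smaller modulus d dividing q.\<close>
definition primitive_dirichlet_char :: "nat \<Rightarrow> (nat \<Rightarrow> complex) \<Rightarrow> bool" where
  "primitive_dirichlet_char q \<phi> \<longleftrightarrow> dirichlet_char q \<phi> \<and>
     (\<forall>d. d dvd q \<and> d < q \<longrightarrow>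
        (\<exists>a. coprime a q \<and> a mod d = 1 mod d \<and> \<phi> a \<noteq> 1))"

definition e_mod :: "nat \<Rightarrow> complex \<Rightarrow> complex" where
  "e_mod p z = exp (2 * of_real pi * \<i> * z / of_nat p)"

definition gauss_sum :: "nat \<Rightarrow> (nat \<Rightarrow> complex) \<Rightarrow> complex" where
  "gauss_sum q \<phi> = (\<Sum>a<q. \<phi> a * e_mod q (of_nat a))"

definition twisted_sigma :: "complex \<Rightarrow> nat \<Rightarrow> (nat \<Rightarrow> complex) \<Rightarrow> complex" where
  "twisted_sigma \<xi> n \<psi> = (\<Sum>d\<in>{d. d dvd n}. \<psi> d * of_nat d powr \<xi>)"

text \<open>Dirichlet L-function L(s,chi) = sum_{n>=1} chi(n) n^{-s} (used for Re s > 1).\<close>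
definition dirichlet_L :: "(nat \<Rightarrow> complex) \<Rightarrow> complex \<Rightarrow> complex" where
  "dirichlet_L \<phi> s = (\<Sum>n. \<phi> (Suc n) / of_nat (Suc n) powr s)"

end

theory Submission
  imports Defs "HOL-Number_Theory.Number_Theory" "HOL-Computational_Algebra.Squarefree"
begin

text \<open>
  Let \<open>\<chi>\<close> be the conjugate of \<open>\<psi>\<close>, again a primitive character mod \<open>q\<close>, and for
  \<open>l \<ge> 1\<close> let \<open>F(l)\<close> and \<open>G(l)\<close> be the sums of \<open>\<chi>(h) e_{lq}(hn)\<close> over all residues
  \<open>h\<close> mod \<open>lq\<close> and over the reduced ones, so that \<open>G(l)\<close> is the inner sum of the theorem.
  Writing \<open>h = bq + a\<close> and using the separability \<open>\<Sum>\<^sub>a \<chi>(a) e_q(ak) = \<psi>(k) \<tau>(\<chi>)\<close> of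
  primitive Gauss sums gives \<open>F(l) = \<tau>(\<chi>) l \<psi>(n/l)\<close> for \<open>l dvd n\<close> and \<open>F(l) = 0\<close>
  otherwise, hence \<open>\<Sum>\<^sub>l F(l) / l^(1 + \<xi>) = \<tau>(\<chi>) \<sigma>\<^sub>\<xi>(n, \<psi>) / n^\<xi>\<close>.
  As \<open>\<chi>(h) = 0\<close> unless \<open>(h, q) = 1\<close>, sieving the condition \<open>(h, l) = 1\<close> with the Moebius
  function gives the Dirichlet convolution \<open>G = \<mu>\<chi> * F\<close>, and \<open>\<mu>\<chi>\<close> is the Dirichlet inverse
  of \<open>\<chi>\<close>. So \<open>\<Sum>\<^sub>l G(l) / l^(1 + \<xi>) = \<tau>(\<chi>) \<sigma>\<^sub>\<xi>(n, \<psi>) / (n^\<xi> L(1 + \<xi>, \<chi>))\<close>, and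
  \<open>\<tau>(\<chi>) \<noteq> 0\<close>.
\<close>

(* Infinite_Set_Sum and Infinite_Sum both define abs_summable_on; the former is meant throughout. *)
no_notation Infinite_Sum.abs_summable_on (infixr \<open>abs'_summable'_on\<close> 46)

section \<open>Additive characters\<close>

lemma e_mod_add: "e_mod p (a + b) = e_mod p a * e_mod p b"
  unfolding e_mod_def by (simp add: add_divide_distrib distrib_left exp_add)

lemma e_mod_of_nat_mult: "e_mod p (of_nat (j * k)) = e_mod p (of_nat j) ^ k"
proof -
  have "e_mod p (of_nat (j * k)) = exp (of_nat k * (2 * of_real pi * \<i> * of_nat j / of_nat p))"
    unfolding e_mod_def by (simp add: algebra_simps)
  then show ?thesis
    by (simp only: exp_of_nat_mult e_mod_def)
qed

lemma e_mod_eq_1_iff: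
  assumes "p > 0"
  shows "e_mod p (of_nat j) = 1 \<longleftrightarrow> p dvd j"
proof
  assume "p dvd j"
  then obtain k where "j = p * k" ..
  then have "e_mod p (of_nat j) = exp (of_nat k * (2 * of_real pi * \<i>))"
    unfolding e_mod_def using assms by (simp add: field_simps)
  then show "e_mod p (of_nat j) = 1"
    by (simp add: exp_of_nat_mult)
next
  assume "e_mod p (of_nat j) = 1"
  then obtain k :: int where "2 * pi * real j / real p = 2 * real_of_int k * pi"
    unfolding e_mod_def exp_eq_1 by auto
  then have "real j = real_of_int k * real p"
    using assms by (simp add: field_simps)
  then have "int j = k * int p"
    by (metis of_int_eq_iff of_int_mult of_int_of_nat_eq)
  then show "p dvd j"
    by (metis dvd_triv_right int_dvd_int_iff)
qed

lemma e_mod_cong: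
  assumes "p > 0" and "[a = b] (mod p)"
  shows "e_mod p (of_nat a) = e_mod p (of_nat b)"
proof -
  obtain k1 k2 where lin: "b + k1 * p = a + k2 * p"
    using assms(2) cong_iff_lin_nat by blast
  have period: "e_mod p (of_nat (c + k * p)) = e_mod p (of_nat c)" for c k
  proof -
    have "e_mod p (of_nat (k * p)) = 1"
      by (subst e_mod_eq_1_iff[OF assms(1)]) simp
    then show ?thesis
      by (simp only: of_nat_add e_mod_add mult_1_right)
  qed
  show ?thesis
    using period[of b k1] period[of a k2] by (simp only: lin)
qed

lemma e_mod_mod:
  assumes "p > 0"
  shows "e_mod p (of_nat (a mod p)) = e_mod p (of_nat a)"
  using assms by (rule e_mod_cong) simp

lemma e_mod_mult_cancel:
  assumes "e > 0"
  shows "e_mod (e * m) (of_nat (e * x)) = e_mod m (of_nat x)"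
  unfolding e_mod_def using assms by (simp add: ac_simps)

lemma sum_e_mod_orthogonality:
  assumes "p > 0"
  shows "(\<Sum>k<p. e_mod p (of_nat (j * k))) = (if p dvd j then of_nat p else 0)"
proof (cases "p dvd j")
  case True
  then have "e_mod p (of_nat (j * k)) = 1" for k
    by (subst e_mod_eq_1_iff[OF assms]) simp
  then show ?thesis
    using True by simp
next
  case False
  define r where "r = e_mod p (of_nat j)"
  have "r \<noteq> 1"
    using False by (simp add: r_def e_mod_eq_1_iff[OF assms])
  moreover have "r ^ p = 1"
    unfolding r_def e_mod_of_nat_mult[symmetric] by (subst e_mod_eq_1_iff[OF assms]) simp
  ultimately have "(\<Sum>k<p. r ^ k) = 0"
    by (simp add: sum_gp_strict)
  then show ?thesis
    using False by (simp only: e_mod_of_nat_mult r_def) simp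
qed

section \<open>Dirichlet characters and Gauss sums\<close>

lemma sum_lessThan_mult_mod_reindex:
  fixes f :: "nat \<Rightarrow> 'a::comm_monoid_add"
  assumes "coprime b q"
  shows "(\<Sum>a<q. f (a * b mod q)) = (\<Sum>a<q. f a)"
proof (cases "q = 0")
  case False
  have inj: "inj_on (\<lambda>a. a * b mod q) {..<q}"
  proof (rule inj_onI)
    fix x y assume "x \<in> {..<q}" "y \<in> {..<q}" "x * b mod q = y * b mod q"
    then show "x = y"
      using assms cong_mult_rcancel_nat by (auto simp: cong_def)
  qed
  moreover have "(\<lambda>a. a * b mod q) ` {..<q} \<subseteq> {..<q}"
    using False by auto
  ultimately have "bij_betw (\<lambda>a. a * b mod q) {..<q} {..<q}"
    by (simp add: bij_betw_def endo_inj_surj)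
  then show ?thesis
    by (rule sum.reindex_bij_betw)
qed simp

context
  fixes q :: nat and \<phi> :: "nat \<Rightarrow> complex"
  assumes \<phi>: "dirichlet_char q \<phi>"
begin

lemma dirichlet_char_modulus_pos: "q > 0"
  and dirichlet_char_mult: "\<phi> (m * n) = \<phi> m * \<phi> n"
  and dirichlet_char_add_modulus: "\<phi> (n + q) = \<phi> n"
  and dirichlet_char_eq_0_iff: "\<phi> n = 0 \<longleftrightarrow> \<not> coprime n q"
  using \<phi> unfolding dirichlet_char_def by auto

lemma dirichlet_char_cong:
  assumes "[m = n] (mod q)"
  shows "\<phi> m = \<phi> n"
proof -
  have periodic: "\<phi> (n + k * q) = \<phi> n" for n k
  proof (induction k)
    case (Suc k)
    have "\<phi> (n + Suc k * q) = \<phi> ((n + k * q) + q)"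
      by (simp add: ac_simps)
    also have "\<dots> = \<phi> (n + k * q)"
      by (rule dirichlet_char_add_modulus)
    finally show ?case
      using Suc by simp
  qed simp
  obtain k1 k2 where "n + k1 * q = m + k2 * q"
    using assms cong_iff_lin_nat by blast
  then show ?thesis
    by (metis periodic)
qed

lemma dirichlet_char_mod: "\<phi> (n mod q) = \<phi> n"
  by (rule dirichlet_char_cong) simp

lemma dirichlet_char_1: "\<phi> 1 = 1"
proof -
  have "\<phi> 1 * \<phi> 1 = \<phi> 1 * 1" and "\<phi> 1 \<noteq> 0"
    using dirichlet_char_mult[of 1 1] dirichlet_char_eq_0_iff[of 1] by simp_all
  then show ?thesis
    by (metis mult_cancel_left)
qed

lemma norm_dirichlet_char_coprime:
  assumes "coprime n q"
  shows "norm (\<phi> n) = 1"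
proof -
  have "\<phi> n ^ k = \<phi> (n ^ k)" for k
  proof (induction k)
    case 0
    show ?case
      by (simp only: power_0 dirichlet_char_1)
  qed (simp add: dirichlet_char_mult)
  also have "\<phi> (n ^ totient q) = \<phi> 1"
    using euler_theorem[OF assms] by (rule dirichlet_char_cong)
  also have "\<dots> = 1"
    by (rule dirichlet_char_1)
  finally have "norm (\<phi> n) ^ totient q = 1"
    by (metis norm_one norm_power)
  then show ?thesis
    using dirichlet_char_modulus_pos by (intro power_eq_imp_eq_base[of _ "totient q" 1]) auto
qed

lemma norm_dirichlet_char_le: "norm (\<phi> n) \<le> 1"
  using norm_dirichlet_char_coprime[of n] dirichlet_char_eq_0_iff[of n]
  by (cases "coprime n q") auto

lemma dirichlet_char_cnj: "dirichlet_char q (\<lambda>m. cnj (\<phi> m))"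
  using \<phi> unfolding dirichlet_char_def by auto

lemma twisted_gauss_sum_coprime:
  assumes "coprime k q"
  shows "(\<Sum>a<q. \<phi> a * e_mod q (of_nat (a * k))) = cnj (\<phi> k) * gauss_sum q \<phi>"
proof -
  have q: "q > 0" by (rule dirichlet_char_modulus_pos)
  have "\<phi> k * (\<Sum>a<q. \<phi> a * e_mod q (of_nat (a * k)))
      = (\<Sum>a<q. \<phi> (a * k mod q) * e_mod q (of_nat (a * k mod q)))"
    unfolding sum_distrib_left
    by (intro sum.cong refl) (simp add: dirichlet_char_mod e_mod_mod[OF q] dirichlet_char_mult)
  also have "\<dots> = gauss_sum q \<phi>"
    unfolding gauss_sum_def by (rule sum_lessThan_mult_mod_reindex[OF assms])
  finally have "cnj (\<phi> k) * \<phi> k * (\<Sum>a<q. \<phi> a * e_mod q (of_nat (a * k))) = cnj (\<phi> k) * gauss_sum q \<phi>"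
    by (simp add: mult.assoc)
  moreover have "cnj (\<phi> k) * \<phi> k = 1"
    using norm_dirichlet_char_coprime[OF assms] complex_norm_square[of "\<phi> k"] by (simp add: mult.commute)
  ultimately show ?thesis
    by simp
qed

end

lemma primitive_dirichlet_char_imp_dirichlet_char:
  "primitive_dirichlet_char q \<phi> \<Longrightarrow> dirichlet_char q \<phi>"
  unfolding primitive_dirichlet_char_def by (elim conjE)

lemma primitive_dirichlet_char_cnj:
  assumes "primitive_dirichlet_char q \<phi>"
  shows "primitive_dirichlet_char q (\<lambda>m. cnj (\<phi> m))"
  using assms dirichlet_char_cnj unfolding primitive_dirichlet_char_def by auto

lemma twisted_gauss_sum_not_coprime:
  assumes prim: "primitive_dirichlet_char q \<phi>" and "\<not> coprime k q"
  shows "(\<Sum>a<q. \<phi> a * e_mod q (of_nat (a * k))) = 0"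
proof -
  have \<phi>: "dirichlet_char q \<phi>"
    using prim by (rule primitive_dirichlet_char_imp_dirichlet_char)
  have q: "q > 0"
    using \<phi> by (rule dirichlet_char_modulus_pos)
  define g where "g = gcd k q"
  define d where "d = q div g"
  have q_eq: "q = d * g"
    unfolding d_def g_def by simp
  have "g \<noteq> 1"
    using assms(2) coprime_iff_gcd_eq_1 unfolding g_def by blast
  moreover have "g > 0"
    using q unfolding g_def by simp
  ultimately have "d < q"
    unfolding d_def using q by (intro div_less_dividend) auto
  moreover have "d dvd q"
    using q_eq by (metis dvd_triv_left)
  moreover have "\<forall>d. d dvd q \<and> d < q \<longrightarrow> (\<exists>a. coprime a q \<and> a mod d = 1 mod d \<and> \<phi> a \<noteq> 1)"
    using prim unfolding primitive_dirichlet_char_def by (elim conjE)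
  ultimately obtain b where b: "coprime b q" "[b = 1] (mod d)" "\<phi> b \<noteq> 1"
    unfolding cong_def by blast
  txt \<open>As \<open>b \<equiv> 1\<close> mod \<open>q / gcd k q\<close>, multiplying by \<open>b\<close> permutes the residues mod \<open>q\<close>
    but fixes \<open>e_q(ak)\<close>; so the sum is invariant under multiplication by \<open>\<phi> b \<noteq> 1\<close>.\<close>
  obtain k' where k': "k = g * k'"
    unfolding g_def by (rule dvdE[OF gcd_dvd1])
  have "[b * g = 1 * g] (mod q)"
    unfolding q_eq by (rule cong_cmult_rightI[OF b(2)])
  then have "[a * (b * g) * k' = a * (1 * g) * k'] (mod q)" for a
    by (rule cong_scalar_right[OF cong_scalar_left])
  then have shift: "[a * b * k = a * k] (mod q)" for a
    unfolding k' by (simp add: mult.assoc)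
  define S where "S = (\<Sum>a<q. \<phi> a * e_mod q (of_nat (a * k)))"
  have "S = (\<Sum>a<q. \<phi> (a * b mod q) * e_mod q (of_nat (a * b mod q * k)))"
    unfolding S_def by (rule sum_lessThan_mult_mod_reindex[OF b(1), symmetric])
  also have "\<dots> = \<phi> b * S"
    unfolding S_def sum_distrib_left
  proof (intro sum.cong refl)
    fix a
    have "e_mod q (of_nat (a * b mod q * k)) = e_mod q (of_nat (a * k))"
      using shift[of a] by (intro e_mod_cong[OF q]) (simp add: cong_def mod_mult_left_eq)
    then show "\<phi> (a * b mod q) * e_mod q (of_nat (a * b mod q * k)) = \<phi> b * (\<phi> a * e_mod q (of_nat (a * k)))"
      by (simp add: dirichlet_char_mod[OF \<phi>] dirichlet_char_mult[OF \<phi>])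
  qed
  finally have "(1 - \<phi> b) * S = 0"
    by (simp add: algebra_simps)
  then show ?thesis
    using b(3) unfolding S_def by simp
qed

lemma twisted_gauss_sum:
  assumes prim: "primitive_dirichlet_char q \<phi>"
  shows "(\<Sum>a<q. \<phi> a * e_mod q (of_nat (a * k))) = cnj (\<phi> k) * gauss_sum q \<phi>"
proof -
  have \<phi>: "dirichlet_char q \<phi>"
    using prim by (rule primitive_dirichlet_char_imp_dirichlet_char)
  show ?thesis
  proof (cases "coprime k q")
    case True
    then show ?thesis
      by (rule twisted_gauss_sum_coprime[OF \<phi>])
  next
    case False
    then show ?thesis
      using twisted_gauss_sum_not_coprime[OF prim False] dirichlet_char_eq_0_iff[OF \<phi>, of k] by simp
  qed
qed

lemma gauss_sum_nonzero:
  assumes prim: "primitive_dirichlet_char q \<phi>"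
  shows "gauss_sum q \<phi> \<noteq> 0"
proof
  assume "gauss_sum q \<phi> = 0"
  then have vanish: "(\<Sum>a<q. \<phi> a * e_mod q (of_nat (a * k))) = 0" for k
    using twisted_gauss_sum[OF prim] by simp
  have \<phi>: "dirichlet_char q \<phi>"
    using prim by (rule primitive_dirichlet_char_imp_dirichlet_char)
  have q: "q > 0"
    using \<phi> by (rule dirichlet_char_modulus_pos)
  txt \<open>Finite Fourier inversion: weighting the twisted sums by \<open>e_q(-k)\<close> and summing
    over \<open>k\<close> recovers \<open>q \<phi>(1) = q\<close>, so they cannot all vanish.\<close>
  have "0 = (\<Sum>k<q. e_mod q (of_nat (k * (q - 1))) * (\<Sum>a<q. \<phi> a * e_mod q (of_nat (a * k))))"
    by (simp only: vanish mult_zero_right sum.neutral_const)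
  also have "\<dots> = (\<Sum>a<q. \<phi> a * (\<Sum>k<q. e_mod q (of_nat ((a + (q - 1)) * k))))"
  proof -
    have pointwise: "e_mod q (of_nat (k * (q - 1))) * (\<phi> a * e_mod q (of_nat (a * k)))
        = \<phi> a * e_mod q (of_nat ((a + (q - 1)) * k))" for a k
    proof -
      have "(a + (q - 1)) * k = a * k + k * (q - 1)"
        by (simp only: add_mult_distrib mult.commute[of "q - 1"])
      then show ?thesis
        by (simp only: of_nat_add e_mod_add ac_simps)
    qed
    show ?thesis
      unfolding sum_distrib_left by (subst sum.swap) (simp only: pointwise)
  qed
  also have "\<dots> = (\<Sum>a<q. if a = 1 mod q then \<phi> a * of_nat q else 0)"
  proof (intro sum.cong refl)
    fix a assume "a \<in> {..<q}"
    then have a: "a < q"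
      by simp
    have "q dvd a + (q - 1) \<longleftrightarrow> [a + (q - 1) = 1 + (q - 1)] (mod q)"
      using q by (simp add: cong_def dvd_eq_mod_eq_0)
    also have "\<dots> \<longleftrightarrow> [a = 1] (mod q)"
      by (rule cong_add_rcancel_nat)
    also have "\<dots> \<longleftrightarrow> a = 1 mod q"
      using a by (simp add: cong_def)
    finally have "q dvd a + (q - 1) \<longleftrightarrow> a = 1 mod q" .
    then show "\<phi> a * (\<Sum>k<q. e_mod q (of_nat ((a + (q - 1)) * k))) = (if a = 1 mod q then \<phi> a * of_nat q else 0)"
      unfolding sum_e_mod_orthogonality[OF q] by simp
  qed
  also have "\<dots> = \<phi> (1 mod q) * of_nat q"
    using q by (simp only: sum.delta finite_lessThan lessThan_iff mod_less_divisor if_True)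
  also have "\<dots> = of_nat q"
    by (simp only: dirichlet_char_mod[OF \<phi>] dirichlet_char_1[OF \<phi>] mult_1_left)
  finally show False
    using q by simp
qed

section \<open>The Moebius function\<close>

definition moebius_mu :: "nat \<Rightarrow> int" where
  "moebius_mu d = (if squarefree d then (-1) ^ card (prime_factors d) else 0)"

lemma abs_moebius_mu_le: "\<bar>moebius_mu d\<bar> \<le> 1"
  unfolding moebius_mu_def by (simp add: power_abs)

lemma prime_factorization_Prod_subset:
  fixes X :: "nat set"
  assumes "X \<subseteq> prime_factors m"
  shows "prime_factorization (\<Prod>X) = mset_set X"
proof -
  have "finite X"
    using assms finite_subset by blast
  then show ?thesis
    using prime_factorization_prod_mset_primes[of "mset_set X"] assms
    by (auto simp: prod_unfold_prod_mset in_prime_factors_iff)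
qed

lemma prime_factors_Prod_subset:
  fixes X :: "nat set"
  assumes "X \<subseteq> prime_factors m"
  shows "prime_factors (\<Prod>X) = X"
  using prime_factorization_Prod_subset[OF assms] finite_subset[OF assms] by simp

lemma bij_betw_Prod_squarefree_divisors:
  fixes m :: nat
  assumes "m > 0"
  shows "bij_betw Prod (Pow (prime_factors m)) {d. d dvd m \<and> squarefree d}"
proof (rule bij_betw_byWitness[where f' = prime_factors])
  show "\<forall>X\<in>Pow (prime_factors m). prime_factors (\<Prod>X) = X"
    using prime_factors_Prod_subset by blast
  show "\<forall>d\<in>{d. d dvd m \<and> squarefree d}. \<Prod>(prime_factors d) = d"
  proof
    fix d assume "d \<in> {d. d dvd m \<and> squarefree d}"
    then have "squarefree d" and "d \<noteq> 0"
      using assms by auto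
    then have "multiplicity p d = 1" if "p \<in> prime_factors d" for p
      using that squarefree_factorial_semiring' by blast
    then show "\<Prod>(prime_factors d) = d"
      using prod_prime_factors[OF \<open>d \<noteq> 0\<close>] by simp
  qed
  show "Prod ` Pow (prime_factors m) \<subseteq> {d. d dvd m \<and> squarefree d}"
  proof clarify
    fix X assume X: "X \<subseteq> prime_factors m"
    have "mset_set X \<subseteq># mset_set (prime_factors m)"
      using X by (simp add: subset_imp_msubset_mset_set)
    also have "\<dots> \<subseteq># prime_factorization m"
      by (rule mset_set_set_mset_msubset)
    moreover have "\<Prod>X > 0"
      using X by (intro prod_pos) (auto simp: in_prime_factors_iff prime_gt_0_nat)
    ultimately have "\<Prod>X dvd m"
      using X by (intro prime_factorization_subset_imp_dvd) (auto simp: prime_factorization_Prod_subset)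
    moreover have "squarefree (\<Prod>X)"
      using X by (intro squarefree_prod_coprime) (auto intro: primes_coprime squarefree_prime simp: in_prime_factors_iff)
    ultimately show "\<Prod>X dvd m \<and> squarefree (\<Prod>X)" ..
  qed
  show "prime_factors ` {d. d dvd m \<and> squarefree d} \<subseteq> Pow (prime_factors m)"
    using assms by (auto intro: dvd_prime_factors[THEN subsetD])
qed

lemma sum_moebius_mu_divisors:
  fixes m :: nat
  assumes "m > 0"
  shows "(\<Sum>d | d dvd m. of_int (moebius_mu d) :: 'a::comm_ring_1) = (if m = 1 then 1 else 0)"
proof -
  have "(\<Sum>d | d dvd m. of_int (moebius_mu d) :: 'a) = (\<Sum>d | d dvd m \<and> squarefree d. of_int (moebius_mu d))"
    using assms by (intro sum.mono_neutral_right) (auto simp: moebius_mu_def)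
  also have "\<dots> = (\<Sum>X\<in>Pow (prime_factors m). of_int (moebius_mu (\<Prod>X)))"
    by (rule sum.reindex_bij_betw[OF bij_betw_Prod_squarefree_divisors[OF assms], symmetric])
  also have "\<dots> = (\<Sum>X\<in>Pow (prime_factors m). (-1) ^ card X)"
  proof (intro sum.cong refl)
    fix X assume X: "X \<in> Pow (prime_factors m)"
    then have "squarefree (\<Prod>X)"
      using bij_betw_imp_surj_on[OF bij_betw_Prod_squarefree_divisors[OF assms]] by blast
    moreover have "prime_factors (\<Prod>X) = X"
      using X by (simp add: prime_factors_Prod_subset)
    ultimately show "of_int (moebius_mu (\<Prod>X)) = ((-1) ^ card X :: 'a)"
      by (simp add: moebius_mu_def)
  qed
  also have "\<dots> = (\<Prod>p\<in>prime_factors m. 1 - 1)"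
    using prod_diff_conv_sum[of "prime_factors m" "\<lambda>_. 1::'a" "\<lambda>_. 1"] by simp
  also have "\<dots> = (if m = 1 then 1 else 0)"
    using assms by (simp add: power_0_left card_eq_0_iff prime_factorization_empty_iff)
  finally show ?thesis .
qed

lemma sum_moebius_mu_common_divisors:
  assumes "l > 0"
  shows "(\<Sum>e | e dvd l \<and> e dvd h. of_int (moebius_mu e) :: 'a::comm_ring_1) = (if coprime h l then 1 else 0)"
proof -
  have "{e. e dvd l \<and> e dvd h} = {e. e dvd gcd h l}"
    by auto
  then have "(\<Sum>e | e dvd l \<and> e dvd h. of_int (moebius_mu e) :: 'a) = (\<Sum>e | e dvd gcd h l. of_int (moebius_mu e))"
    by (simp only:)
  also have "\<dots> = (if gcd h l = 1 then 1 else 0)"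
    using assms by (intro sum_moebius_mu_divisors) simp
  also have "\<dots> = (if coprime h l then 1 else 0)"
    by (simp only: coprime_iff_gcd_eq_1)
  finally show ?thesis .
qed

lemma norm_moebius_mu_char_le:
  assumes "dirichlet_char q \<phi>"
  shows "norm (of_int (moebius_mu d) * \<phi> d) \<le> 1"
  using abs_moebius_mu_le[of d] norm_dirichlet_char_le[OF assms, of d]
  by (simp add: norm_mult mult_le_one)

section \<open>Dirichlet series\<close>

text \<open>For \<open>n = 0\<close> the set of divisors is infinite, so the sum is \<open>0\<close>.\<close>

definition dirichlet_conv :: "(nat \<Rightarrow> 'a::semiring_0) \<Rightarrow> (nat \<Rightarrow> 'a) \<Rightarrow> nat \<Rightarrow> 'a" where
  "dirichlet_conv a b n = (\<Sum>d | d dvd n. a d * b (n div d))"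

lemma sum_divisors_reflect:
  fixes n :: nat and f :: "nat \<Rightarrow> 'a::comm_monoid_add"
  shows "(\<Sum>d | d dvd n. f (n div d)) = (\<Sum>d | d dvd n. f d)"
proof (cases "n = 0")
  case False
  then show ?thesis
    by (intro sum.reindex_bij_witness[of _ "(div) n" "(div) n"]) (auto elim: dvdE)
qed simp

lemma dirichlet_conv_char_moebius_mu:
  assumes \<phi>: "dirichlet_char q \<phi>"
  shows "dirichlet_conv \<phi> (\<lambda>d. of_int (moebius_mu d) * \<phi> d) n = (if n = 1 then 1 else 0)"
proof (cases "n = 0")
  case False
  have "dirichlet_conv \<phi> (\<lambda>d. of_int (moebius_mu d) * \<phi> d) n = \<phi> n * (\<Sum>d | d dvd n. of_int (moebius_mu (n div d)))"
    unfolding dirichlet_conv_def sum_distrib_left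
  proof (intro sum.cong refl)
    fix d assume "d \<in> {d. d dvd n}"
    then have "\<phi> d * \<phi> (n div d) = \<phi> n"
      by (simp add: dirichlet_char_mult[OF \<phi>, symmetric])
    then show "\<phi> d * (of_int (moebius_mu (n div d)) * \<phi> (n div d)) = \<phi> n * of_int (moebius_mu (n div d))"
      by (simp add: ac_simps)
  qed
  also have "\<dots> = \<phi> n * (if n = 1 then 1 else 0)"
    using False sum_divisors_reflect[where f = "\<lambda>d. of_int (moebius_mu d) :: complex" and n = n]
    by (simp add: sum_moebius_mu_divisors)
  also have "\<dots> = (if n = 1 then 1 else 0)"
    using dirichlet_char_1[OF \<phi>] by simp
  finally show ?thesis .
qed (simp add: dirichlet_conv_def)

text \<open>The term at \<open>n = 0\<close> is \<open>0\<close> (as \<open>0 powr s = 0\<close>), so Dirichlet series can be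
  summed over all of \<open>nat\<close>.\<close>

definition dirichlet_term :: "(nat \<Rightarrow> complex) \<Rightarrow> complex \<Rightarrow> nat \<Rightarrow> complex" where
  "dirichlet_term a s n = a n / of_nat n powr s"

lemma dirichlet_term_0 [simp]: "dirichlet_term a s 0 = 0"
  unfolding dirichlet_term_def by simp

lemma of_nat_mult_powr: "(of_nat (m * n) :: complex) powr s = of_nat m powr s * of_nat n powr s"
  using powr_times_real[of "of_nat m" "of_nat n" s] by simp

lemma abs_summable_dirichlet_term:
  assumes s: "Re s > 1" and bound: "\<And>n. norm (a n) \<le> B"
  shows "dirichlet_term a s abs_summable_on UNIV"
proof -
  have majorant: "summable (\<lambda>n. B * real n powr (- Re s))"
    using summable_real_powr_iff[of "- Re s"] s by (intro summable_mult) simp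
  have "norm (norm (dirichlet_term a s n)) \<le> B * real n powr (- Re s)" for n
  proof (cases "n = 0")
    case False
    have "norm (dirichlet_term a s n) = norm (a n) / real n powr Re s"
      unfolding dirichlet_term_def using norm_powr_real_powr[of "of_nat n" s] by (simp add: norm_divide)
    also have "\<dots> \<le> B / real n powr Re s"
      by (rule divide_right_mono[OF bound]) simp
    also have "\<dots> = B * real n powr (- Re s)"
      by (simp add: powr_minus_divide)
    finally show ?thesis
      by simp
  qed simp
  then have "summable (\<lambda>n. norm (dirichlet_term a s n))"
    by (intro summable_comparison_test'[OF majorant, of 0])
  then show ?thesis
    by (simp add: abs_summable_on_nat_iff')
qed

lemma bij_betw_divisor_pairs:
  "bij_betw (\<lambda>(n, d). (d, n div d)) (SIGMA n:{0<..}. {d. d dvd n}) ({0<..} \<times> {0<..} :: (nat \<times> nat) set)"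
  by (rule bij_betw_byWitness[where f' = "\<lambda>(d, m). (d * m, d)"]) (auto elim!: dvdE)

lemma
  fixes a b :: "nat \<Rightarrow> complex"
  assumes a: "dirichlet_term a s abs_summable_on UNIV" and b: "dirichlet_term b s abs_summable_on UNIV"
  shows abs_summable_dirichlet_term_conv:
      "dirichlet_term (dirichlet_conv a b) s abs_summable_on UNIV"
    and infsetsum_dirichlet_term_conv:
      "infsetsum (dirichlet_term (dirichlet_conv a b) s) UNIV
         = infsetsum (dirichlet_term a s) UNIV * infsetsum (dirichlet_term b s) UNIV"
proof -
  define P where "P = (\<lambda>(d, m). dirichlet_term a s d * dirichlet_term b s m)"
  define Q where "Q = (\<lambda>(n, d). a d * b (n div d) / of_nat n powr s)"
  define S :: "(nat \<times> nat) set" where "S = {0<..} \<times> {0<..}"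
  define T :: "(nat \<times> nat) set" where "T = (SIGMA n:{0<..}. {d. d dvd n})"
  define g :: "nat \<times> nat \<Rightarrow> nat \<times> nat" where "g = (\<lambda>(n, d). (d, n div d))"
  have g: "bij_betw g T S"
    unfolding g_def S_def T_def by (rule bij_betw_divisor_pairs)
  have P_UNIV: "P abs_summable_on UNIV \<times> UNIV"
    "infsetsum P (UNIV \<times> UNIV) = infsetsum (dirichlet_term a s) UNIV * infsetsum (dirichlet_term b s) UNIV"
    unfolding P_def using abs_summable_on_product[OF _ _ a b] infsetsum_product[OF _ _ a b] by simp_all
  have "P x = 0" if "x \<notin> S" for x
    using that unfolding P_def S_def by (cases x) auto
  then have P_S: "P abs_summable_on S" "infsetsum P S = infsetsum P (UNIV \<times> UNIV)"
    using abs_summable_on_subset[OF P_UNIV(1)] by (auto intro: infsetsum_cong_neutral)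
  have P_g: "P (g x) = Q x" if "x \<in> T" for x
  proof -
    obtain n d where x: "x = (n, d)" and "d dvd n"
      using \<open>x \<in> T\<close> unfolding T_def by auto
    then have "(of_nat n :: complex) powr s = of_nat d powr s * of_nat (n div d) powr s"
      by (metis dvd_mult_div_cancel of_nat_mult_powr)
    then show ?thesis
      unfolding P_def Q_def g_def dirichlet_term_def x by simp
  qed
  have Q_T: "Q abs_summable_on T" "infsetsum Q T = infsetsum P S"
  proof -
    have "(\<lambda>x. P (g x)) abs_summable_on T" "infsetsum (\<lambda>x. P (g x)) T = infsetsum P S"
      using abs_summable_on_reindex_bij_betw[OF g] P_S(1) infsetsum_reindex_bij_betw[OF g] by blast+
    moreover have "(\<lambda>x. P (g x)) abs_summable_on T \<longleftrightarrow> Q abs_summable_on T"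
      and "infsetsum (\<lambda>x. P (g x)) T = infsetsum Q T"
      using P_g by (auto intro: abs_summable_on_cong infsetsum_cong)
    ultimately show "Q abs_summable_on T" "infsetsum Q T = infsetsum P S"
      by simp_all
  qed
  have inner: "infsetsum (\<lambda>d. Q (n, d)) {d. d dvd n} = dirichlet_term (dirichlet_conv a b) s n"
    if "n > 0" for n
    using that by (simp add: Q_def dirichlet_term_def dirichlet_conv_def sum_divide_distrib)
  have "(\<lambda>n. infsetsum (\<lambda>d. Q (n, d)) {d. d dvd n}) abs_summable_on {0<..}"
    using Q_T(1) unfolding T_def by (intro abs_summable_on_Sigma_project1') simp_all
  then have "dirichlet_term (dirichlet_conv a b) s abs_summable_on {0<..}"
    using inner by (subst (asm) abs_summable_on_cong) auto
  then have "dirichlet_term (dirichlet_conv a b) s abs_summable_on insert 0 {0<..}"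
    by simp
  moreover have "insert 0 {0<..} = (UNIV :: nat set)"
    by auto
  ultimately show "dirichlet_term (dirichlet_conv a b) s abs_summable_on UNIV"
    by simp
  have "infsetsum (dirichlet_term (dirichlet_conv a b) s) UNIV
      = infsetsum (dirichlet_term (dirichlet_conv a b) s) {0<..}"
    by (rule infsetsum_cong_neutral) auto
  also have "\<dots> = infsetsum (\<lambda>n. infsetsum (\<lambda>d. Q (n, d)) {d. d dvd n}) {0<..}"
    using inner by (intro infsetsum_cong) auto
  also have "\<dots> = infsetsum Q T"
    using Q_T(1) unfolding T_def by (subst infsetsum_Sigma) simp_all
  finally show "infsetsum (dirichlet_term (dirichlet_conv a b) s) UNIV
      = infsetsum (dirichlet_term a s) UNIV * infsetsum (dirichlet_term b s) UNIV"
    using Q_T(2) P_S(2) P_UNIV(2) by simp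
qed

lemma sums_dirichlet_term_Suc:
  assumes "dirichlet_term a s abs_summable_on UNIV"
  shows "(\<lambda>n. dirichlet_term a s (Suc n)) sums infsetsum (dirichlet_term a s) UNIV"
  using sums_infsetsum_nat'[OF assms] by (simp add: sums_Suc_iff)

lemma dirichlet_L_eq_infsetsum:
  assumes "dirichlet_term \<phi> s abs_summable_on UNIV"
  shows "dirichlet_L \<phi> s = infsetsum (dirichlet_term \<phi> s) UNIV"
  using sums_unique[OF sums_dirichlet_term_Suc[OF assms]]
  unfolding dirichlet_L_def dirichlet_term_def by simp

lemma infsetsum_dirichlet_term_char_mult_moebius_mu:
  assumes \<phi>: "dirichlet_char q \<phi>" and s: "Re s > 1"
  shows "infsetsum (dirichlet_term \<phi> s) UNIV
           * infsetsum (dirichlet_term (\<lambda>d. of_int (moebius_mu d) * \<phi> d) s) UNIV = 1"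
proof -
  have "infsetsum (dirichlet_term \<phi> s) UNIV
          * infsetsum (dirichlet_term (\<lambda>d. of_int (moebius_mu d) * \<phi> d) s) UNIV
      = infsetsum (dirichlet_term (dirichlet_conv \<phi> (\<lambda>d. of_int (moebius_mu d) * \<phi> d)) s) UNIV"
    using norm_dirichlet_char_le[OF \<phi>] norm_moebius_mu_char_le[OF \<phi>]
    by (intro infsetsum_dirichlet_term_conv[symmetric] abs_summable_dirichlet_term[OF s])
  also have "dirichlet_term (dirichlet_conv \<phi> (\<lambda>d. of_int (moebius_mu d) * \<phi> d)) s
      = (\<lambda>n. if n = 1 then 1 else 0)"
    by (simp add: fun_eq_iff dirichlet_term_def dirichlet_conv_char_moebius_mu[OF \<phi>])
  also have "infsetsum (\<lambda>n::nat. if n = 1 then 1 else 0) UNIV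
      = infsetsum (\<lambda>n::nat. if n = 1 then 1 else 0 :: complex) {1}"
    by (rule infsetsum_cong_neutral) auto
  finally show ?thesis
    by simp
qed

section \<open>Complete and reduced exponential sums\<close>

definition char_exp_sum :: "nat \<Rightarrow> (nat \<Rightarrow> complex) \<Rightarrow> nat \<Rightarrow> nat \<Rightarrow> complex" where
  "char_exp_sum q \<phi> n l = (\<Sum>h<l * q. \<phi> h * e_mod (l * q) (of_nat (h * n)))"

definition coprime_char_exp_sum :: "nat \<Rightarrow> (nat \<Rightarrow> complex) \<Rightarrow> nat \<Rightarrow> nat \<Rightarrow> complex" where
  "coprime_char_exp_sum q \<phi> n l =
     (\<Sum>h | h < l * q \<and> coprime h (l * q). \<phi> h * e_mod (l * q) (of_nat (h * n)))"

lemma sum_lessThan_mult_blocks: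
  fixes g :: "nat \<Rightarrow> 'a::comm_monoid_add"
  shows "(\<Sum>h<l * q. g h) = (\<Sum>b<l. \<Sum>a<q. g (b * q + a))"
proof -
  have "(\<Sum>a<q. g (b * q + a)) = sum g {b * q..<b * q + q}" for b
    using sum.shift_bounds_nat_ivl[of g 0 "b * q" q] by (simp add: atLeast0LessThan add.commute)
  then show ?thesis
    by (simp add: sum.nat_group)
qed

lemma char_exp_sum_eq:
  assumes prim: "primitive_dirichlet_char q \<phi>" and l: "l > 0"
  shows "char_exp_sum q \<phi> n l =
           (if l dvd n then gauss_sum q \<phi> * of_nat l * cnj (\<phi> (n div l)) else 0)"
proof -
  have \<phi>: "dirichlet_char q \<phi>"
    using prim by (rule primitive_dirichlet_char_imp_dirichlet_char)
  have q: "q > 0"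
    using \<phi> by (rule dirichlet_char_modulus_pos)
  have split: "\<phi> (b * q + a) * e_mod (l * q) (of_nat ((b * q + a) * n))
      = \<phi> a * e_mod (l * q) (of_nat (a * n)) * e_mod l (of_nat (n * b))" for a b
  proof -
    have "(b * q + a) * n = a * n + q * (n * b)"
      by (simp add: algebra_simps)
    moreover have "e_mod (l * q) (of_nat (q * (n * b))) = e_mod l (of_nat (n * b))"
      using e_mod_mult_cancel[OF q, of l "n * b"] by (simp add: mult.commute)
    ultimately have "e_mod (l * q) (of_nat ((b * q + a) * n))
        = e_mod (l * q) (of_nat (a * n)) * e_mod l (of_nat (n * b))"
      by (simp only: of_nat_add e_mod_add)
    moreover have "\<phi> (b * q + a) = \<phi> a"
      by (rule dirichlet_char_cong[OF \<phi>]) (simp add: cong_def)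
    ultimately show ?thesis
      by (simp add: mult.assoc)
  qed
  have "char_exp_sum q \<phi> n l
      = (\<Sum>a<q. \<phi> a * e_mod (l * q) (of_nat (a * n))) * (\<Sum>b<l. e_mod l (of_nat (n * b)))"
    unfolding char_exp_sum_def sum_lessThan_mult_blocks split
    by (simp add: sum_product sum.swap[of _ "{..<l}"])
  also have "(\<Sum>b<l. e_mod l (of_nat (n * b))) = (if l dvd n then of_nat l else 0)"
    by (rule sum_e_mod_orthogonality[OF l])
  finally have F: "char_exp_sum q \<phi> n l
      = (\<Sum>a<q. \<phi> a * e_mod (l * q) (of_nat (a * n))) * (if l dvd n then of_nat l else 0)" .
  show ?thesis
  proof (cases "l dvd n")
    case True
    then obtain m where m: "n = l * m" ..
    have "(\<Sum>a<q. \<phi> a * e_mod (l * q) (of_nat (a * n))) = (\<Sum>a<q. \<phi> a * e_mod q (of_nat (a * m)))"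
    proof (intro sum.cong refl)
      fix a
      have "a * n = l * (a * m)"
        unfolding m by simp
      then show "\<phi> a * e_mod (l * q) (of_nat (a * n)) = \<phi> a * e_mod q (of_nat (a * m))"
        by (simp only: e_mod_mult_cancel[OF l])
    qed
    also have "\<dots> = cnj (\<phi> m) * gauss_sum q \<phi>"
      by (rule twisted_gauss_sum[OF prim])
    finally show ?thesis
      using F True m l by simp
  qed (simp add: F)
qed

lemma norm_char_exp_sum_le:
  assumes prim: "primitive_dirichlet_char q \<phi>" and "n > 0"
  shows "norm (char_exp_sum q \<phi> n l) \<le> norm (gauss_sum q \<phi>) * n"
proof (cases "l > 0 \<and> l dvd n")
  case True
  have \<phi>: "dirichlet_char q \<phi>"
    using prim by (rule primitive_dirichlet_char_imp_dirichlet_char)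
  have "norm (char_exp_sum q \<phi> n l) = norm (gauss_sum q \<phi>) * l * norm (\<phi> (n div l))"
    using True by (simp add: char_exp_sum_eq[OF prim] norm_mult)
  also have "\<dots> \<le> norm (gauss_sum q \<phi>) * n * 1"
    using True assms(2) norm_dirichlet_char_le[OF \<phi>]
    by (intro mult_mono mult_left_mono) (auto dest: dvd_imp_le)
  finally show ?thesis
    by simp
next
  case False
  then consider "l = 0" | "l > 0" "\<not> l dvd n"
    by blast
  then show ?thesis
    by cases (simp add: char_exp_sum_def, simp add: char_exp_sum_eq[OF prim])
qed

lemma sum_multiples_char_exp_sum:
  assumes \<phi>: "dirichlet_char q \<phi>" and e: "e > 0"
  shows "(\<Sum>h | h < e * L * q \<and> e dvd h. \<phi> h * e_mod (e * L * q) (of_nat (h * n)))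
       = \<phi> e * char_exp_sum q \<phi> n L"
proof -
  have "(\<Sum>h | h < e * L * q \<and> e dvd h. \<phi> h * e_mod (e * L * q) (of_nat (h * n)))
      = (\<Sum>j<L * q. \<phi> (e * j) * e_mod (e * (L * q)) (of_nat (e * (j * n))))"
    using e by (intro sum.reindex_bij_witness[of _ "\<lambda>j. e * j" "\<lambda>h. h div e"])
      (auto simp: ac_simps elim!: dvdE)
  also have "\<dots> = \<phi> e * char_exp_sum q \<phi> n L"
    unfolding char_exp_sum_def sum_distrib_left
    by (simp only: e_mod_mult_cancel[OF e] dirichlet_char_mult[OF \<phi>] mult.assoc)
  finally show ?thesis .
qed

lemma coprime_char_exp_sum_eq_dirichlet_conv:
  assumes \<phi>: "dirichlet_char q \<phi>"
  shows "coprime_char_exp_sum q \<phi> n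
           = dirichlet_conv (\<lambda>e. of_int (moebius_mu e) * \<phi> e) (char_exp_sum q \<phi> n)"
proof
  fix l
  show "coprime_char_exp_sum q \<phi> n l
          = dirichlet_conv (\<lambda>e. of_int (moebius_mu e) * \<phi> e) (char_exp_sum q \<phi> n) l"
  proof (cases "l = 0")
    case True
    then show ?thesis
      by (simp add: coprime_char_exp_sum_def dirichlet_conv_def)
  next
    case False
    define E where "E h = \<phi> h * e_mod (l * q) (of_nat (h * n))" for h
    have "coprime_char_exp_sum q \<phi> n l = (\<Sum>h\<in>{h \<in> {..<l * q}. coprime h (l * q)}. E h)"
      unfolding coprime_char_exp_sum_def E_def by (rule sum.cong) auto
    also have "\<dots> = (\<Sum>h<l * q. if coprime h (l * q) then E h else 0)"
      by (rule sum.inter_filter) simp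
    also have "\<dots> = (\<Sum>h<l * q. (if coprime h l then 1 else 0) * E h)"
      by (intro sum.cong refl) (auto simp: E_def dirichlet_char_eq_0_iff[OF \<phi>])
    also have "\<dots> = (\<Sum>h<l * q. \<Sum>e | e dvd l \<and> e dvd h. of_int (moebius_mu e) * E h)"
      using False by (simp only: sum_moebius_mu_common_divisors[symmetric] sum_distrib_right)
    also have "\<dots> = (\<Sum>e | e dvd l. \<Sum>h | h < l * q \<and> e dvd h. of_int (moebius_mu e) * E h)"
      using sum.swap_restrict[of "{..<l * q}" "{e. e dvd l}" "\<lambda>h e. of_int (moebius_mu e) * E h" "\<lambda>h e. e dvd h"] False
      by simp
    also have "\<dots> = (\<Sum>e | e dvd l. of_int (moebius_mu e) * \<phi> e * char_exp_sum q \<phi> n (l div e))"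
    proof (intro sum.cong refl)
      fix e assume "e \<in> {e. e dvd l}"
      then have "e > 0" and l_eq: "e * (l div e) * q = l * q"
        using False by (auto intro: Nat.gr0I)
      show "(\<Sum>h | h < l * q \<and> e dvd h. of_int (moebius_mu e) * E h)
          = of_int (moebius_mu e) * \<phi> e * char_exp_sum q \<phi> n (l div e)"
        using sum_multiples_char_exp_sum[OF \<phi> \<open>e > 0\<close>, of "l div e" n]
        unfolding E_def l_eq by (simp add: sum_distrib_left[symmetric] mult.assoc)
    qed
    finally show ?thesis
      by (simp add: dirichlet_conv_def)
  qed
qed

lemma infsetsum_dirichlet_term_char_exp_sum:
  assumes prim: "primitive_dirichlet_char q \<phi>" and n: "n > 0"
  shows "infsetsum (dirichlet_term (char_exp_sum q \<phi> n) (1 + \<xi>)) UNIV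
           = gauss_sum q \<phi> * (twisted_sigma \<xi> n (\<lambda>m. cnj (\<phi> m)) / of_nat n powr \<xi>)"
proof -
  have "infsetsum (dirichlet_term (char_exp_sum q \<phi> n) (1 + \<xi>)) UNIV
      = infsetsum (dirichlet_term (char_exp_sum q \<phi> n) (1 + \<xi>)) {l. l dvd n}"
    by (rule infsetsum_cong_neutral) (auto simp: dirichlet_term_def char_exp_sum_eq[OF prim])
  also have "\<dots> = (\<Sum>l | l dvd n. dirichlet_term (char_exp_sum q \<phi> n) (1 + \<xi>) l)"
    using n by simp
  also have "\<dots> = (\<Sum>l | l dvd n. gauss_sum q \<phi> * (cnj (\<phi> (n div l)) * of_nat (n div l) powr \<xi> / of_nat n powr \<xi>))"
  proof (intro sum.cong refl)
    fix l assume "l \<in> {l. l dvd n}"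
    then obtain k where n_eq: "n = l * k" and "l > 0" and "k > 0"
      using n by (auto elim!: dvdE)
    have "(of_nat l :: complex) powr (1 + \<xi>) = of_nat l * of_nat l powr \<xi>"
      using \<open>l > 0\<close> by (simp add: powr_add)
    moreover have "(of_nat n :: complex) powr \<xi> = of_nat l powr \<xi> * of_nat k powr \<xi>"
      unfolding n_eq by (rule of_nat_mult_powr)
    moreover have "char_exp_sum q \<phi> n l = gauss_sum q \<phi> * of_nat l * cnj (\<phi> k)"
      using \<open>l > 0\<close> \<open>k > 0\<close> by (simp add: char_exp_sum_eq[OF prim] n_eq)
    ultimately show "dirichlet_term (char_exp_sum q \<phi> n) (1 + \<xi>) l
        = gauss_sum q \<phi> * (cnj (\<phi> (n div l)) * of_nat (n div l) powr \<xi> / of_nat n powr \<xi>)"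
      using \<open>l > 0\<close> \<open>k > 0\<close> by (simp add: dirichlet_term_def n_eq field_simps)
  qed
  also have "\<dots> = gauss_sum q \<phi> * ((\<Sum>l | l dvd n. cnj (\<phi> (n div l)) * of_nat (n div l) powr \<xi>) / of_nat n powr \<xi>)"
    by (simp add: sum_distrib_left sum_divide_distrib)
  also have "(\<Sum>l | l dvd n. cnj (\<phi> (n div l)) * of_nat (n div l) powr \<xi>) = twisted_sigma \<xi> n (\<lambda>m. cnj (\<phi> m))"
    using sum_divisors_reflect[where f = "\<lambda>d. cnj (\<phi> d) * of_nat d powr \<xi>" and n = n]
    by (simp add: twisted_sigma_def)
  finally show ?thesis .
qed

lemma
  assumes prim: "primitive_dirichlet_char q \<phi>" and n: "n > 0" and s: "Re s > 1"
  shows abs_summable_dirichlet_term_coprime_char_exp_sum: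
      "dirichlet_term (coprime_char_exp_sum q \<phi> n) s abs_summable_on UNIV"
    and dirichlet_L_mult_infsetsum_coprime_char_exp_sum:
      "dirichlet_L \<phi> s * infsetsum (dirichlet_term (coprime_char_exp_sum q \<phi> n) s) UNIV
         = infsetsum (dirichlet_term (char_exp_sum q \<phi> n) s) UNIV"
proof -
  have \<phi>: "dirichlet_char q \<phi>"
    using prim by (rule primitive_dirichlet_char_imp_dirichlet_char)
  define c where "c d = of_int (moebius_mu d) * \<phi> d" for d
  have L: "dirichlet_term \<phi> s abs_summable_on UNIV"
    by (rule abs_summable_dirichlet_term[OF s norm_dirichlet_char_le[OF \<phi>]])
  have M: "dirichlet_term c s abs_summable_on UNIV"
    unfolding c_def by (rule abs_summable_dirichlet_term[OF s norm_moebius_mu_char_le[OF \<phi>]])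
  have F: "dirichlet_term (char_exp_sum q \<phi> n) s abs_summable_on UNIV"
    by (rule abs_summable_dirichlet_term[OF s norm_char_exp_sum_le[OF prim n]])
  have G: "coprime_char_exp_sum q \<phi> n = dirichlet_conv c (char_exp_sum q \<phi> n)"
    unfolding c_def by (rule coprime_char_exp_sum_eq_dirichlet_conv[OF \<phi>])
  show "dirichlet_term (coprime_char_exp_sum q \<phi> n) s abs_summable_on UNIV"
    unfolding G by (rule abs_summable_dirichlet_term_conv[OF M F])
  have "dirichlet_L \<phi> s * infsetsum (dirichlet_term (coprime_char_exp_sum q \<phi> n) s) UNIV
      = (infsetsum (dirichlet_term \<phi> s) UNIV * infsetsum (dirichlet_term c s) UNIV)
          * infsetsum (dirichlet_term (char_exp_sum q \<phi> n) s) UNIV"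
    unfolding G infsetsum_dirichlet_term_conv[OF M F] dirichlet_L_eq_infsetsum[OF L]
    by (simp only: mult.assoc)
  also have "\<dots> = infsetsum (dirichlet_term (char_exp_sum q \<phi> n) s) UNIV"
    using infsetsum_dirichlet_term_char_mult_moebius_mu[OF \<phi> s] unfolding c_def by simp
  finally show "dirichlet_L \<phi> s * infsetsum (dirichlet_term (coprime_char_exp_sum q \<phi> n) s) UNIV
      = infsetsum (dirichlet_term (char_exp_sum q \<phi> n) s) UNIV" .
qed

theorem lemma2p2:
  fixes q n :: nat and \<psi> :: "nat \<Rightarrow> complex" and \<xi> :: complex
  assumes "primitive_dirichlet_char q \<psi>"
    and "n > 0"
    and "Re \<xi> > 0"
  shows "summable (\<lambda>l. 1 / of_nat (Suc l) powr (1 + \<xi>) *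
             (\<Sum>h\<in>{h. h < Suc l * q \<and> coprime h (Suc l * q)}.
                 cnj (\<psi> h) * e_mod (Suc l * q) (of_nat (h * n))))
       \<and> twisted_sigma \<xi> n \<psi> / of_nat n powr \<xi> =
         dirichlet_L (\<lambda>m. cnj (\<psi> m)) (1 + \<xi>) / gauss_sum q (\<lambda>m. cnj (\<psi> m)) *
         (\<Sum>l. 1 / of_nat (Suc l) powr (1 + \<xi>) *
             (\<Sum>h\<in>{h. h < Suc l * q \<and> coprime h (Suc l * q)}.
                 cnj (\<psi> h) * e_mod (Suc l * q) (of_nat (h * n))))"
proof -
  define \<phi> where "\<phi> = (\<lambda>m. cnj (\<psi> m))"
  define G where "G = dirichlet_term (coprime_char_exp_sum q \<phi> n) (1 + \<xi>)"
  define S where "S = twisted_sigma \<xi> n \<psi> / of_nat n powr \<xi>"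
  have prim: "primitive_dirichlet_char q \<phi>"
    unfolding \<phi>_def by (rule primitive_dirichlet_char_cnj[OF assms(1)])
  have s: "Re (1 + \<xi>) > 1"
    using assms(3) by simp
  have series: "(\<lambda>l. 1 / of_nat (Suc l) powr (1 + \<xi>) *
      (\<Sum>h\<in>{h. h < Suc l * q \<and> coprime h (Suc l * q)}. cnj (\<psi> h) * e_mod (Suc l * q) (of_nat (h * n))))
      = (\<lambda>l. G (Suc l))"
    by (simp add: fun_eq_iff G_def dirichlet_term_def coprime_char_exp_sum_def \<phi>_def)
  have "(\<lambda>l. G (Suc l)) sums infsetsum G UNIV"
    unfolding G_def
    by (intro sums_dirichlet_term_Suc abs_summable_dirichlet_term_coprime_char_exp_sum[OF prim assms(2) s])
  moreover have "dirichlet_L \<phi> (1 + \<xi>) * infsetsum G UNIV = gauss_sum q \<phi> * S"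
    using dirichlet_L_mult_infsetsum_coprime_char_exp_sum[OF prim assms(2) s]
      infsetsum_dirichlet_term_char_exp_sum[OF prim assms(2)]
    by (simp add: G_def S_def \<phi>_def)
  moreover have "gauss_sum q \<phi> \<noteq> 0"
    by (rule gauss_sum_nonzero[OF prim])
  ultimately show ?thesis
    unfolding series S_def[symmetric] \<phi>_def[symmetric] by (auto simp: sums_iff field_simps)
qed

end
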